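(* For every prime $p$: (i) $\{(r,e,d)\in\mathscr{U}(p)\mid d=r\}=\mathscr{B}_+(p)$; (ii) $\{(r,e,d)\in\mathscr{U}(p)\mid d=r-1\}=\mathscr{B}_0(p)$; (iii) $\{(r,e,d)\in\mathscr{U}(p)\mid r=2\}=\{(r,e,d)\in\mathscr{B}(p)\mid r=2\}$.
   Context: Let $p$ be a prime. For integer triples $(r,e,d)$ put $g=\left\{red-\frac{d(d+1)}{2}(p-1)\right\}\big/\frac{r(r-1)}{2}\in\mathbb{Q}$. $\mathscr{U}(p)$ is the set of integer triples $(r,e,d)$ with $r\ge2$, $e\ge1$, $1\le d\le p$, $d(p-1)\le re\le r(p-1)$, $g>0$, and $g\in2\mathbb{Z}$ if $p\ne2$, $g\in\mathbb{Z}$ if $p=2$. $\mathscr{B}(p)=\mathscr{B}_+(p)\cup\mathscr{B}_0(p)\cup\mathscr{B}_-(p)$ where $\mathscr{B}_+(p)=\{(r,e,d): 2\le r\le p,\ e=p-1,\ d=r\}$, $\mathscr{B}_0(p)=\{(r,e,d): 2\le r\le p+1,\ (p-1)/2<e\le p-1,\ r(p-1-e)\le p-1,\ d=r-1\}$, $\mathscr{B}_-(p)=\{(r,e,d): r\ge2,\ (p-1)/2<e\le p-1,\ r(p-1-e)=p-1,\ d=r-2\}$ (integer triples). *)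

theory Defs
  imports Complex_Main "HOL-Computational_Algebra.Primes"
begin

definition gval :: "int \<Rightarrow> int \<Rightarrow> int \<Rightarrow> int \<Rightarrow> rat" where
  "gval p r e d =
     (of_int (r * e * d) - of_int (d * (d + 1)) / 2 * of_int (p - 1)) / (of_int (r * (r - 1)) / 2)"

definition U :: "int \<Rightarrow> (int \<times> int \<times> int) set" where
  "U p = {(r, e, d). r \<ge> 2 \<and> e \<ge> 1 \<and> 1 \<le> d \<and> d \<le> p \<and>
            d * (p - 1) \<le> r * e \<and> r * e \<le> r * (p - 1) \<and>
            gval p r e d > 0 \<and>
            (if p \<noteq> 2 then (\<exists>k::int. gval p r e d = of_int (2 * k))
             else gval p r e d \<in> \<int>)}"

definition Bplus :: "int \<Rightarrow> (int \<times> int \<times> int) set" where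
  "Bplus p = {(r, e, d). 2 \<le> r \<and> r \<le> p \<and> e = p - 1 \<and> d = r}"

definition Bzero :: "int \<Rightarrow> (int \<times> int \<times> int) set" where
  "Bzero p = {(r, e, d). 2 \<le> r \<and> r \<le> p + 1 \<and>
      (of_int (p - 1) / 2 :: rat) < of_int e \<and> e \<le> p - 1 \<and>
      r * (p - 1 - e) \<le> p - 1 \<and> d = r - 1}"

definition Bminus :: "int \<Rightarrow> (int \<times> int \<times> int) set" where
  "Bminus p = {(r, e, d). 2 \<le> r \<and>
      (of_int (p - 1) / 2 :: rat) < of_int e \<and> e \<le> p - 1 \<and>
      r * (p - 1 - e) = p - 1 \<and> d = r - 2}"

definition B :: "int \<Rightarrow> (int \<times> int \<times> int) set" where
  "B p = Bplus p \<union> Bzero p \<union> Bminus p"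

end

theory Submission
  imports Defs
begin

text \<open>On the diagonal \<open>d = r\<close> the bounds \<open>d(p - 1) \<le> re \<le> r(p - 1)\<close> force
\<open>e = p - 1\<close>, and then \<open>g = p - 1\<close>; on the subdiagonal \<open>d = r - 1\<close> one has
\<open>g = 2e - (p - 1)\<close> for every \<open>e\<close>. In both cases \<open>g\<close> is an integer with the parity of
\<open>p - 1\<close>, so for odd \<open>p\<close> the parity condition is automatic and membership in \<open>U(p)\<close>
reduces to integer inequalities. For \<open>r = 2\<close> the same bounds give \<open>1 \<le> d \<le> 2\<close>, and
\<open>B\<^sub>-(p)\<close> contributes nothing because \<open>2(p - 1 - e) = p - 1\<close> contradicts \<open>2e > p - 1\<close>.\<close>

lemma gval_diagonal:
  assumes "r \<noteq> 0" "r \<noteq> 1"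
  shows "gval p r (p - 1) r = of_int (p - 1)"
  using assms by (simp add: gval_def field_simps)

lemma gval_subdiagonal:
  assumes "r \<noteq> 0" "r \<noteq> 1"
  shows "gval p r e (r - 1) = of_int (2 * e - (p - 1))"
  using assms by (simp add: gval_def field_simps)

lemma of_int_half_less_iff:
  "(of_int a / 2 :: 'a::linordered_field) < of_int b \<longleftrightarrow> a < 2 * b"
  by (simp add: field_simps) (metis of_int_less_iff of_int_mult of_int_numeral)

lemma ex_of_int_eq_double_iff_even:
  "(\<exists>k::int. (of_int n :: 'a::ring_char_0) = of_int (2 * k)) \<longleftrightarrow> even n"
  by (metis dvd_def of_int_eq_iff)

lemma prime_int_ne_2_imp_even_minus_1:
  assumes "prime (p::int)" "p \<noteq> 2"
  shows "even (p - 1)"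
proof -
  have "2 < p"
    using prime_ge_2_int[OF assms(1)] assms(2) by simp
  then show ?thesis
    using prime_odd_int[OF assms(1)] by simp
qed

lemma mem_U_iff_of_int_gval:
  assumes "gval p r e d = of_int n"
  shows "(r, e, d) \<in> U p \<longleftrightarrow> r \<ge> 2 \<and> e \<ge> 1 \<and> 1 \<le> d \<and> d \<le> p \<and>
    d * (p - 1) \<le> r * e \<and> r * e \<le> r * (p - 1) \<and> n > 0 \<and> (p \<noteq> 2 \<longrightarrow> even n)"
  unfolding U_def mem_Collect_eq case_prod_conv assms ex_of_int_eq_double_iff_even
  by simp

lemma mem_U_imp_bounds:
  assumes "(r, e, d) \<in> U p"
  shows "2 \<le> r" "1 \<le> d" "d * (p - 1) \<le> r * e" "r * e \<le> r * (p - 1)"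
  using assms by (simp_all add: U_def)

lemma mem_U_imp_le:
  assumes "(r, e, d) \<in> U p" "1 < p"
  shows "d \<le> r"
proof -
  have "d * (p - 1) \<le> r * (p - 1)"
    using mem_U_imp_bounds(3,4)[OF assms(1)] by linarith
  then show ?thesis
    using assms(2) by simp
qed

lemma mem_U_diagonal_iff:
  assumes "prime p"
  shows "(r, e, r) \<in> U p \<longleftrightarrow> (r, e, r) \<in> Bplus p"
proof (cases "2 \<le> r \<and> e = p - 1")
  case True
  have "(r, p - 1, r) \<in> U p \<longleftrightarrow> 2 \<le> r \<and> p - 1 \<ge> 1 \<and> 1 \<le> r \<and> r \<le> p \<and>
      r * (p - 1) \<le> r * (p - 1) \<and> r * (p - 1) \<le> r * (p - 1) \<and> p - 1 > 0 \<and>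
      (p \<noteq> 2 \<longrightarrow> even (p - 1))"
    using True by (intro mem_U_iff_of_int_gval gval_diagonal) auto
  moreover have "1 < p" "p \<noteq> 2 \<Longrightarrow> even (p - 1)"
    using prime_ge_2_int[OF assms] prime_int_ne_2_imp_even_minus_1[OF assms] by auto
  ultimately show ?thesis
    using True by (auto simp: Bplus_def)
next
  case False
  have "(r, e, r) \<notin> U p"
  proof
    assume U: "(r, e, r) \<in> U p"
    then have "r * e = r * (p - 1)" "2 \<le> r"
      using mem_U_imp_bounds[OF U] by auto
    then show False
      using False by simp
  qed
  then show ?thesis
    using False by (simp add: Bplus_def)
qed

lemma mem_U_subdiagonal_iff:
  assumes "prime p"
  shows "(r, e, r - 1) \<in> U p \<longleftrightarrow> (r, e, r - 1) \<in> Bzero p"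
proof (cases "2 \<le> r")
  case True
  have "(r, e, r - 1) \<in> U p \<longleftrightarrow> 2 \<le> r \<and> 1 \<le> e \<and> 1 \<le> r - 1 \<and> r - 1 \<le> p \<and>
      (r - 1) * (p - 1) \<le> r * e \<and> r * e \<le> r * (p - 1) \<and> 2 * e - (p - 1) > 0 \<and>
      (p \<noteq> 2 \<longrightarrow> even (2 * e - (p - 1)))"
    using True by (intro mem_U_iff_of_int_gval gval_subdiagonal) auto
  moreover have "1 < p" "p \<noteq> 2 \<Longrightarrow> even (2 * e - (p - 1))"
    using prime_ge_2_int[OF assms] prime_int_ne_2_imp_even_minus_1[OF assms] by auto
  moreover have "(r - 1) * (p - 1) \<le> r * e \<longleftrightarrow> r * (p - 1 - e) \<le> p - 1"
    by (simp add: algebra_simps)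
  moreover have "r * e \<le> r * (p - 1) \<longleftrightarrow> e \<le> p - 1"
    using True by simp
  ultimately show ?thesis
    unfolding Bzero_def mem_Collect_eq case_prod_conv of_int_half_less_iff
    using True by auto
next
  case False
  then show ?thesis
    using mem_U_imp_bounds(1) by (auto simp: Bzero_def)
qed

lemma not_mem_Bminus_two: "(2, e, d) \<notin> Bminus p"
  by (auto simp: Bminus_def of_int_half_less_iff)

lemma mem_U_two_iff_mem_B:
  assumes "prime p"
  shows "(2, e, d) \<in> U p \<longleftrightarrow> (2, e, d) \<in> B p"
proof -
  have "1 < p"
    using prime_ge_2_int[OF assms] by simp
  then have "(2, e, d) \<in> U p \<Longrightarrow> d = 1 \<or> d = 2"
    using mem_U_imp_le[of 2 e d p] mem_U_imp_bounds(2)[of 2 e d p] by linarith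
  moreover have "(2, e, d) \<in> B p \<Longrightarrow> d = 1 \<or> d = 2"
    using not_mem_Bminus_two[of e d p] by (auto simp: B_def Bplus_def Bzero_def)
  moreover have "(2, e, 2) \<in> U p \<longleftrightarrow> (2, e, 2) \<in> B p"
    using mem_U_diagonal_iff[OF assms, of 2 e] not_mem_Bminus_two[of e 2 p]
    by (simp add: B_def Bzero_def)
  moreover have "(2, e, 1) \<in> U p \<longleftrightarrow> (2, e, 1) \<in> B p"
    using mem_U_subdiagonal_iff[OF assms, of 2 e] not_mem_Bminus_two[of e 1 p]
    by (simp add: B_def Bplus_def)
  ultimately show ?thesis
    by blast
qed

theorem lemma5:
  fixes p :: int
  assumes "prime p"
  shows "{(r, e, d) \<in> U p. d = r} = Bplus p \<and>
    {(r, e, d) \<in> U p. d = r - 1} = Bzero p \<and>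
    {(r, e, d) \<in> U p. r = 2} = {(r, e, d) \<in> B p. r = 2}"
proof (intro conjI)
  show "{(r, e, d) \<in> U p. d = r} = Bplus p"
    using mem_U_diagonal_iff[OF assms] by (auto simp: Bplus_def)
  show "{(r, e, d) \<in> U p. d = r - 1} = Bzero p"
    using mem_U_subdiagonal_iff[OF assms] by (auto simp: Bzero_def)
  show "{(r, e, d) \<in> U p. r = 2} = {(r, e, d) \<in> B p. r = 2}"
    using mem_U_two_iff_mem_B[OF assms] by auto
qed

end
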